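(* The proximity pre-order $\preceq^{\mathrm{edit\text{-}dist}}$ is well-founded and has the finite-basis property.
   Context: CQs are $q(x_1,\dots,x_k)\text{ :- }\alpha_1,\dots,\alpha_n$ (relational atoms, no constants, pairwise distinct answer variables each occurring in an atom) over a fixed finite schema. Canonical example $e_q=(I_q,(x_1,\dots,x_k))$ with facts the atoms of $q$; $\mathrm{core}(e)$ is the core of a data example (the minimal homomorphically equivalent sub-example, unique up to isomorphism). $\mathrm{edit\text{-}dist}(q_1,q_2)=\min_\rho|\mathrm{core}(e_{q_1})\oplus\mathrm{core}(e_{\rho(q_2)})|$ over bijective renamings $\rho$ of the variables of $q_2(y_1,\dots,y_k)$ with $\rho(y_i)=x_i$, $\oplus$ symmetric difference of facts. $q'\preceq^{\mathrm{edit\text{-}dist}}_q q''$ iff $\mathrm{edit\text{-}dist}(q,q')\le\mathrm{edit\text{-}dist}(q,q'')$; $\prec_q$ is the strict part. A proximity pre-order $\preceq$ is well-founded if for each CQ $q$, every non-empty set of CQs has a $\preceq_q$-minimal element; it has the finite-basis property if for each CQ $q$, every set of CQs has only finitely many $\preceq_q$-minimal elements up to equivalence (equivalence: same answers on every instance). *)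

theory Defs
  imports Main
begin

(* Schema: relation symbols of a finite type 'r, with arity function ar.
   Variables / values: nat.  A fact / atom is (R, argument list). *)
type_synonym 'r fact = "'r \<times> nat list"

(* A CQ q(x_1..x_k) :- atoms  is represented as (answer variable list, set of atoms). *)
type_synonym 'r cq = "nat list \<times> 'r fact set"

definition cq_ans :: "'r cq \<Rightarrow> nat list" where "cq_ans q = fst q"
definition cq_atoms :: "'r cq \<Rightarrow> 'r fact set" where "cq_atoms q = snd q"

definition wf_fact :: "('r \<Rightarrow> nat) \<Rightarrow> 'r fact \<Rightarrow> bool" where
  "wf_fact ar f \<longleftrightarrow> length (snd f) = ar (fst f)"

definition wf_instance :: "('r \<Rightarrow> nat) \<Rightarrow> 'r fact set \<Rightarrow> bool" where
  "wf_instance ar I \<longleftrightarrow> finite I \<and> (\<forall>f\<in>I. wf_fact ar f)"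

definition is_cq :: "('r \<Rightarrow> nat) \<Rightarrow> 'r cq \<Rightarrow> bool" where
  "is_cq ar q \<longleftrightarrow> wf_instance ar (cq_atoms q) \<and> distinct (cq_ans q)
     \<and> (\<forall>x\<in>set (cq_ans q). \<exists>f\<in>cq_atoms q. x \<in> set (snd f))"

definition arity :: "'r cq \<Rightarrow> nat" where "arity q = length (cq_ans q)"

definition vars :: "'r cq \<Rightarrow> nat set" where
  "vars q = set (cq_ans q) \<union> (\<Union>f\<in>cq_atoms q. set (snd f))"

definition map_fact :: "(nat \<Rightarrow> nat) \<Rightarrow> 'r fact \<Rightarrow> 'r fact" where
  "map_fact h f = (fst f, map h (snd f))"

definition is_hom :: "(nat \<Rightarrow> nat) \<Rightarrow> 'r fact set \<Rightarrow> nat list \<Rightarrow> 'r fact set \<Rightarrow> nat list \<Rightarrow> bool" where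
  "is_hom h I a J b \<longleftrightarrow> map h a = b \<and> map_fact h ` I \<subseteq> J"

definition hom_equiv :: "'r fact set \<Rightarrow> nat list \<Rightarrow> 'r fact set \<Rightarrow> nat list \<Rightarrow> bool" where
  "hom_equiv I a J b \<longleftrightarrow> (\<exists>h. is_hom h I a J b) \<and> (\<exists>h. is_hom h J b I a)"

definition is_core_of :: "'r fact set \<Rightarrow> 'r fact set \<Rightarrow> nat list \<Rightarrow> bool" where
  "is_core_of C I a \<longleftrightarrow> C \<subseteq> I \<and> hom_equiv C a I a
     \<and> (\<forall>C'. C' \<subset> C \<longrightarrow> \<not> hom_equiv C' a I a)"

definition core_of_cq :: "'r fact set \<Rightarrow> 'r cq \<Rightarrow> bool" where
  "core_of_cq C q \<longleftrightarrow> is_core_of C (cq_atoms q) (cq_ans q)"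

definition rename_cq :: "(nat \<Rightarrow> nat) \<Rightarrow> 'r cq \<Rightarrow> 'r cq" where
  "rename_cq \<rho> q = (map \<rho> (cq_ans q), map_fact \<rho> ` cq_atoms q)"

definition admissible_renaming :: "(nat \<Rightarrow> nat) \<Rightarrow> 'r cq \<Rightarrow> 'r cq \<Rightarrow> bool" where
  "admissible_renaming \<rho> q1 q2 \<longleftrightarrow> inj_on \<rho> (vars q2) \<and> map \<rho> (cq_ans q2) = cq_ans q1"

definition sym_diff :: "'a set \<Rightarrow> 'a set \<Rightarrow> 'a set" where
  "sym_diff A B = (A - B) \<union> (B - A)"

(* Cores are unique only up to isomorphism; the minimum is taken over all choices
   of core sub-examples as well (this does not change the value). *)
definition edit_dist :: "'r cq \<Rightarrow> 'r cq \<Rightarrow> nat" where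
  "edit_dist q1 q2 = (LEAST d. \<exists>\<rho> C1 C2. admissible_renaming \<rho> q1 q2
       \<and> core_of_cq C1 q1 \<and> core_of_cq C2 (rename_cq \<rho> q2)
       \<and> d = card (sym_diff C1 C2))"

definition edit_prox :: "'r cq \<Rightarrow> 'r cq \<Rightarrow> 'r cq \<Rightarrow> bool" where
  "edit_prox q q' q'' \<longleftrightarrow> edit_dist q q' \<le> edit_dist q q''"

definition answers :: "'r cq \<Rightarrow> 'r fact set \<Rightarrow> nat list set" where
  "answers q I = {map h (cq_ans q) | h. map_fact h ` cq_atoms q \<subseteq> I}"

definition cq_equiv :: "('r \<Rightarrow> nat) \<Rightarrow> 'r cq \<Rightarrow> 'r cq \<Rightarrow> bool" where
  "cq_equiv ar q1 q2 \<longleftrightarrow> (\<forall>I. wf_instance ar I \<longrightarrow> answers q1 I = answers q2 I)"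

(* Generic notions for a proximity pre-order P (P q q' q'' means q' \<preceq>_q q''),
   over the CQs of the same arity as the reference query q. *)
definition prox_minimal :: "('r cq \<Rightarrow> 'r cq \<Rightarrow> 'r cq \<Rightarrow> bool) \<Rightarrow> 'r cq \<Rightarrow> 'r cq set \<Rightarrow> 'r cq \<Rightarrow> bool" where
  "prox_minimal P q S m \<longleftrightarrow> m \<in> S \<and> \<not> (\<exists>m'\<in>S. P q m' m \<and> \<not> P q m m')"

definition prox_well_founded :: "('r \<Rightarrow> nat) \<Rightarrow> ('r cq \<Rightarrow> 'r cq \<Rightarrow> 'r cq \<Rightarrow> bool) \<Rightarrow> bool" where
  "prox_well_founded ar P \<longleftrightarrow> (\<forall>q S. is_cq ar q
      \<longrightarrow> S \<subseteq> {q'. is_cq ar q' \<and> arity q' = arity q} \<longrightarrow> S \<noteq> {}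
      \<longrightarrow> (\<exists>m. prox_minimal P q S m))"

definition prox_finite_basis :: "('r \<Rightarrow> nat) \<Rightarrow> ('r cq \<Rightarrow> 'r cq \<Rightarrow> 'r cq \<Rightarrow> bool) \<Rightarrow> bool" where
  "prox_finite_basis ar P \<longleftrightarrow> (\<forall>q S. is_cq ar q
      \<longrightarrow> S \<subseteq> {q'. is_cq ar q' \<and> arity q' = arity q}
      \<longrightarrow> (\<exists>F. finite F \<and> F \<subseteq> {m. prox_minimal P q S m}
              \<and> (\<forall>m. prox_minimal P q S m \<longrightarrow> (\<exists>f\<in>F. cq_equiv ar m f))))"

end

theory Submission
  imports Defs
begin

text \<open>Well-foundedness is immediate because edit distances are natural numbers. For the finite
  basis, all minimal elements of a set have the same distance \<open>d\<close> to \<open>q\<close>. A CQ at distance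
  at most \<open>d\<close> is equivalent (via an injective renaming and the core) to a CQ whose answer
  tuple is that of \<open>q\<close> and which has at most \<open>|q| + d\<close> atoms; renaming its non-answer
  variables injectively into a fixed finite pool leaves only finitely many candidates, so
  the minimal elements fall into finitely many equivalence classes.\<close>

lemma cq_ans_pair [simp]: "cq_ans (a, C) = a"
  by (simp add: cq_ans_def)

lemma cq_atoms_pair [simp]: "cq_atoms (a, C) = C"
  by (simp add: cq_atoms_def)

lemma cq_ans_atoms_pair: "(cq_ans q, cq_atoms q) = q"
  by (simp add: cq_ans_def cq_atoms_def)

lemma cq_ans_rename_cq [simp]: "cq_ans (rename_cq \<rho> q) = map \<rho> (cq_ans q)"
  by (simp add: rename_cq_def)

lemma cq_atoms_rename_cq [simp]: "cq_atoms (rename_cq \<rho> q) = map_fact \<rho> ` cq_atoms q"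
  by (simp add: rename_cq_def)

lemma map_fact_map_fact [simp]: "map_fact h (map_fact g f) = map_fact (h \<circ> g) f"
  by (simp add: map_fact_def)

lemma answers_subset_if_hom:
  assumes "is_hom g I a C b"
  shows "answers (b, C) J \<subseteq> answers (a, I) J"
proof
  fix t assume "t \<in> answers (b, C) J"
  then obtain h where "t = map h b" and "map_fact h ` C \<subseteq> J"
    by (auto simp: answers_def)
  with assms have "t = map (h \<circ> g) a" and "map_fact (h \<circ> g) ` I \<subseteq> J"
    by (auto simp: is_hom_def simp flip: map_fact_map_fact)
  then show "t \<in> answers (a, I) J"
    unfolding answers_def cq_ans_pair cq_atoms_pair by blast
qed

lemma answers_hom_equiv:
  assumes "hom_equiv C b I a"
  shows "answers (b, C) = answers (a, I)"
  using assms answers_subset_if_hom by (fastforce simp: hom_equiv_def)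

lemma hom_equiv_rename_cq:
  assumes "inj_on \<rho> (vars q)"
  shows "hom_equiv (cq_atoms (rename_cq \<rho> q)) (cq_ans (rename_cq \<rho> q)) (cq_atoms q) (cq_ans q)"
proof -
  define \<rho>' where "\<rho>' = inv_into (vars q) \<rho>"
  have inv: "\<rho>' (\<rho> v) = v" if "v \<in> vars q" for v
    using assms that by (simp add: \<rho>'_def)
  have "map \<rho>' (map \<rho> (cq_ans q)) = cq_ans q"
    using inv by (simp add: map_idI vars_def)
  moreover have "map_fact \<rho>' (map_fact \<rho> f) = f" if "f \<in> cq_atoms q" for f
  proof -
    have "set (snd f) \<subseteq> vars q"
      using that by (auto simp: vars_def)
    then show ?thesis
      using inv by (cases f) (auto simp: map_fact_def intro!: map_idI)
  qed
  ultimately have "is_hom \<rho>' (map_fact \<rho> ` cq_atoms q) (map \<rho> (cq_ans q)) (cq_atoms q) (cq_ans q)"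
    by (force simp: is_hom_def)
  then show ?thesis
    by (auto simp: hom_equiv_def is_hom_def)
qed

lemma answers_rename_cq:
  assumes "inj_on \<rho> (vars q)"
  shows "answers (rename_cq \<rho> q) = answers q"
  using answers_hom_equiv[OF hom_equiv_rename_cq[OF assms]]
  by (simp add: rename_cq_def cq_ans_atoms_pair)

lemma ex_core:
  assumes "finite I"
  shows "\<exists>C. is_core_of C I a"
proof -
  let ?P = "\<lambda>C. C \<subseteq> I \<and> hom_equiv C a I a"
  have "is_hom id I a I a"
    by (simp add: is_hom_def map_fact_def)
  then have "?P I"
    by (auto simp: hom_equiv_def)
  then obtain C where C: "?P C" and least: "\<And>C'. ?P C' \<Longrightarrow> card C \<le> card C'"
    using ex_has_least_nat[of ?P I card] by blast
  have "finite C"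
    using C assms finite_subset by blast
  have "\<not> hom_equiv C' a I a" if "C' \<subset> C" for C'
    using least[of C'] psubset_card_mono[OF \<open>finite C\<close> that] that C by auto
  with C show ?thesis
    unfolding is_core_of_def by blast
qed

lemma ex_inj_on_extension:
  assumes "inj_on f A" "f ` A \<subseteq> T" "finite V" "finite T" "card (V - A) \<le> card (T - f ` A)"
  shows "\<exists>g. inj_on g (A \<union> V) \<and> g ` (A \<union> V) \<subseteq> T \<and> (\<forall>a\<in>A. g a = f a)"
proof -
  obtain h where h: "h ` (V - A) \<subseteq> T - f ` A" "inj_on h (V - A)"
    using card_le_inj[of "V - A" "T - f ` A"] assms(3-5) by auto
  define g where "g v = (if v \<in> A then f v else h v)" for v
  have "inj_on g (A \<union> (V - A))"
    unfolding inj_on_Un using assms(1) h by (auto simp: g_def inj_on_def)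
  moreover have "g ` (A \<union> V) \<subseteq> T"
    using assms(2) h(1) by (auto simp: g_def)
  moreover have "\<forall>a\<in>A. g a = f a"
    by (simp add: g_def)
  ultimately show ?thesis
    by (metis Un_Diff_cancel)
qed

lemma ex_lessThan_with_fresh:
  fixes A :: "nat set"
  assumes "finite A"
  shows "\<exists>N. A \<subseteq> {..<N} \<and> k \<le> card ({..<N} - A)"
proof -
  define N where "N = Suc (Max (insert 0 A)) + card A + k"
  have "x \<le> Max (insert 0 A)" if "x \<in> A" for x
    using assms that by simp
  then have "A \<subseteq> {..<N}"
    by (fastforce simp: N_def)
  moreover from this have "card ({..<N} - A) = N - card A"
    using assms by (simp add: card_Diff_subset)
  ultimately show ?thesis
    by (auto simp: N_def)
qed

lemma finite_vars:
  assumes "is_cq ar q"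
  shows "finite (vars q)"
  using assms by (auto simp: is_cq_def wf_instance_def vars_def)

lemma ex_admissible_renaming:
  assumes "is_cq ar q1" "is_cq ar q2" "arity q2 = arity q1"
  shows "\<exists>\<rho>. admissible_renaming \<rho> q1 q2"
proof -
  let ?xs = "cq_ans q1" and ?ys = "cq_ans q2"
  have len: "length ?ys = length ?xs" and dist: "distinct ?xs" "distinct ?ys"
    using assms by (auto simp: is_cq_def arity_def)
  define f where "f v = the (map_of (zip ?ys ?xs) v)" for v
  have f: "map f ?ys = ?xs"
    by (rule nth_equalityI) (use len dist in \<open>simp_all add: f_def map_of_zip_nth\<close>)
  then have inj: "inj_on f (set ?ys)" and img: "f ` set ?ys = set ?xs"
    using dist by (metis distinct_map, metis list.set_map)
  obtain N where N: "set ?xs \<subseteq> {..<N}" "card (vars q2) \<le> card ({..<N} - set ?xs)"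
    using ex_lessThan_with_fresh by blast
  have "card (vars q2 - set ?ys) \<le> card (vars q2)"
    using finite_vars[OF assms(2)] by (rule card_mono) auto
  with N obtain g where "inj_on g (set ?ys \<union> vars q2)" "\<forall>v\<in>set ?ys. g v = f v"
    using ex_inj_on_extension[of f "set ?ys" "{..<N}" "vars q2"] inj img finite_vars[OF assms(2)]
    by auto
  then have "inj_on g (vars q2)" "map g ?ys = map f ?ys"
    by (auto intro: inj_on_subset)
  then show ?thesis
    using f unfolding admissible_renaming_def by metis
qed

lemma edit_dist_attained:
  assumes "is_cq ar q" "is_cq ar m" "arity m = arity q"
  obtains \<rho> C1 C2 where "admissible_renaming \<rho> q m" "core_of_cq C1 q"
    "core_of_cq C2 (rename_cq \<rho> m)" "edit_dist q m = card (sym_diff C1 C2)"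
proof -
  let ?P = "\<lambda>d. \<exists>\<rho> C1 C2. admissible_renaming \<rho> q m
       \<and> core_of_cq C1 q \<and> core_of_cq C2 (rename_cq \<rho> m) \<and> d = card (sym_diff C1 C2)"
  obtain \<rho> where \<rho>: "admissible_renaming \<rho> q m"
    using ex_admissible_renaming assms by blast
  have "finite (cq_atoms q)" "finite (cq_atoms (rename_cq \<rho> m))"
    using assms(1,2) by (simp_all add: is_cq_def wf_instance_def)
  then obtain C1 C2 where "core_of_cq C1 q" "core_of_cq C2 (rename_cq \<rho> m)"
    using ex_core unfolding core_of_cq_def by meson
  then have "?P (card (sym_diff C1 C2))"
    using \<rho> by blast
  then have "?P (LEAST d. ?P d)"
    by (rule LeastI)
  then show ?thesis
    using that unfolding edit_dist_def by blast
qed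

lemma card_le_card_add_sym_diff:
  assumes "finite A" "finite B"
  shows "card B \<le> card A + card (sym_diff A B)"
proof -
  have "card B \<le> card (A \<union> (B - A))"
    using assms by (intro card_mono) auto
  also have "\<dots> \<le> card A + card (B - A)"
    by (rule card_Un_le)
  also have "card (B - A) \<le> card (sym_diff A B)"
    using assms by (intro card_mono) (auto simp: sym_diff_def)
  finally show ?thesis
    by simp
qed

lemma edit_dist_equiv_small_cq:
  assumes q: "is_cq ar q" and m: "is_cq ar m" "arity m = arity q"
  obtains C where "finite C" "card C \<le> card (cq_atoms q) + edit_dist q m"
    "\<forall>f\<in>C. wf_fact ar f" "answers m = answers (cq_ans q, C)"
proof -
  obtain \<rho> C1 C2 where adm: "admissible_renaming \<rho> q m" and C1: "core_of_cq C1 q"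
    and C2: "core_of_cq C2 (rename_cq \<rho> m)" and d: "edit_dist q m = card (sym_diff C1 C2)"
    using edit_dist_attained[OF assms] .
  have fin: "finite (cq_atoms q)" "finite (cq_atoms m)" and wf: "\<forall>f\<in>cq_atoms m. wf_fact ar f"
    using q m by (auto simp: is_cq_def wf_instance_def)
  have C1_sub: "C1 \<subseteq> cq_atoms q" and C2_sub: "C2 \<subseteq> map_fact \<rho> ` cq_atoms m"
    using C1 C2 by (auto simp: core_of_cq_def is_core_of_def)
  then have "finite C1" "finite C2"
    using fin finite_subset finite_imageI by blast+
  then have "card C2 \<le> card C1 + edit_dist q m"
    using card_le_card_add_sym_diff d by simp
  also have "card C1 \<le> card (cq_atoms q)"
    using C1_sub fin by (intro card_mono)
  finally have "card C2 \<le> card (cq_atoms q) + edit_dist q m"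
    by simp
  moreover have "wf_fact ar (map_fact \<rho> f)" if "wf_fact ar f" for f
    using that by (simp add: wf_fact_def map_fact_def)
  then have "\<forall>f\<in>C2. wf_fact ar f"
    using C2_sub wf by blast
  moreover have "answers m = answers (cq_ans q, C2)"
  proof -
    have "answers m = answers (rename_cq \<rho> m)"
      using adm by (simp add: answers_rename_cq admissible_renaming_def)
    also have "\<dots> = answers (cq_ans (rename_cq \<rho> m), C2)"
      using C2 answers_hom_equiv cq_ans_atoms_pair
      unfolding core_of_cq_def is_core_of_def by metis
    also have "cq_ans (rename_cq \<rho> m) = cq_ans q"
      using adm by (simp add: admissible_renaming_def)
    finally show ?thesis .
  qed
  ultimately show ?thesis
    using that \<open>finite C2\<close> by blast
qed

lemma answers_eq_bounded_vars:
  assumes "finite C" "card C \<le> n" "\<forall>f\<in>C. length (snd f) \<le> k"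
    and "set a \<subseteq> {..<N}" "n * k \<le> card ({..<N} - set a)"
  shows "\<exists>D. D \<subseteq> {f. set (snd f) \<subseteq> {..<N} \<and> length (snd f) \<le> k}
           \<and> answers (a, C) = answers (a, D)"
proof -
  define W where "W = (\<Union>f\<in>C. set (snd f))"
  have "finite W"
    using assms(1) by (simp add: W_def)
  have "card W \<le> (\<Sum>f\<in>C. card (set (snd f)))"
    unfolding W_def using assms(1) by (rule card_UN_le)
  also have "\<dots> \<le> (\<Sum>f\<in>C. k)"
    using assms(3) by (intro sum_mono) (meson card_length le_trans)
  also have "\<dots> \<le> n * k"
    using assms(2) by simp
  finally have "card (W - set a) \<le> card ({..<N} - set a)"
    using assms(5) card_mono[OF \<open>finite W\<close>, of "W - set a"] by auto
  then obtain g where g: "inj_on g (set a \<union> W)" "g ` (set a \<union> W) \<subseteq> {..<N}"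
    "\<forall>v\<in>set a. g v = v"
    using ex_inj_on_extension[of id "set a" "{..<N}" W] assms(4) \<open>finite W\<close> by auto
  have vars: "vars (a, C) = set a \<union> W"
    by (simp add: vars_def W_def)
  have "map g a = a"
    using g(3) by (simp add: map_idI)
  then have "answers (a, C) = answers (a, map_fact g ` C)"
    using answers_rename_cq[of g "(a, C)"] g(1) vars by (simp add: rename_cq_def)
  moreover have "map_fact g ` C \<subseteq> {f. set (snd f) \<subseteq> {..<N} \<and> length (snd f) \<le> k}"
  proof
    fix f'
    assume "f' \<in> map_fact g ` C"
    then obtain f where f: "f \<in> C" "f' = map_fact g f"
      by blast
    then have "set (snd f) \<subseteq> W"
      by (auto simp: W_def)
    then show "f' \<in> {f. set (snd f) \<subseteq> {..<N} \<and> length (snd f) \<le> k}"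
      using g(2) assms(3) f by (auto simp: map_fact_def)
  qed
  ultimately show ?thesis
    by blast
qed

lemma finite_answers_edit_dist_le:
  fixes ar :: "'r::finite \<Rightarrow> nat"
  assumes q: "is_cq ar q"
  shows "finite (answers ` {m. is_cq ar m \<and> arity m = arity q \<and> edit_dist q m \<le> B})"
proof -
  define k where "k = Max (range ar)"
  define n where "n = card (cq_atoms q) + B"
  obtain N where N: "set (cq_ans q) \<subseteq> {..<N}" "n * k \<le> card ({..<N} - set (cq_ans q))"
    using ex_lessThan_with_fresh by blast
  define U :: "'r fact set" where "U = {f. set (snd f) \<subseteq> {..<N} \<and> length (snd f) \<le> k}"
  have "U \<subseteq> UNIV \<times> {xs. set xs \<subseteq> {..<N} \<and> length xs \<le> k}"
    by (auto simp: U_def)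
  then have "finite U"
    by (rule finite_subset) (auto intro: finite_lists_length_le)
  have "answers m \<in> (\<lambda>D. answers (cq_ans q, D)) ` Pow U"
    if m: "is_cq ar m" "arity m = arity q" "edit_dist q m \<le> B" for m
  proof -
    obtain C where C: "finite C" "card C \<le> card (cq_atoms q) + edit_dist q m"
      "\<forall>f\<in>C. wf_fact ar f" and eq: "answers m = answers (cq_ans q, C)"
      by (rule edit_dist_equiv_small_cq[OF q m(1,2)])
    have "card C \<le> n"
      using C(2) m(3) by (simp add: n_def)
    have "\<forall>f\<in>C. length (snd f) \<le> k"
      using C(3) by (auto simp: wf_fact_def k_def)
    then obtain D where "D \<subseteq> U" "answers (cq_ans q, C) = answers (cq_ans q, D)"
      using answers_eq_bounded_vars[OF C(1) \<open>card C \<le> n\<close> _ N] by (auto simp: U_def)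
    then show ?thesis
      using eq by (intro image_eqI[where x = D]) simp_all
  qed
  then have "answers ` {m. is_cq ar m \<and> arity m = arity q \<and> edit_dist q m \<le> B}
      \<subseteq> (\<lambda>D. answers (cq_ans q, D)) ` Pow U"
    by (intro image_subsetI) simp
  moreover have "finite ((\<lambda>D. answers (cq_ans q, D)) ` Pow U)"
    using \<open>finite U\<close> by simp
  ultimately show ?thesis
    by (rule finite_subset)
qed

lemma prox_minimal_edit_prox_iff:
  "prox_minimal edit_prox q S m \<longleftrightarrow> m \<in> S \<and> (\<forall>m'\<in>S. edit_dist q m \<le> edit_dist q m')"
  by (auto simp: prox_minimal_def edit_prox_def)

lemma ex_prox_minimal_edit_prox:
  assumes "S \<noteq> {}"
  shows "\<exists>m. prox_minimal edit_prox q S m"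
proof -
  obtain s where "s \<in> S"
    using assms by blast
  then obtain m where "m \<in> S" "\<forall>m'\<in>S. edit_dist q m \<le> edit_dist q m'"
    using ex_has_least_nat[of "\<lambda>m. m \<in> S" s "edit_dist q"] by blast
  then show ?thesis
    using prox_minimal_edit_prox_iff by blast
qed

lemma ex_finite_representatives:
  assumes "finite (\<phi> ` M)"
  shows "\<exists>F. finite F \<and> F \<subseteq> M \<and> (\<forall>m\<in>M. \<exists>f\<in>F. \<phi> m = \<phi> f)"
proof (intro exI conjI)
  show "finite (inv_into M \<phi> ` \<phi> ` M)"
    using assms by (rule finite_imageI)
  show "inv_into M \<phi> ` \<phi> ` M \<subseteq> M"
    by (blast intro: inv_into_into)
  show "\<forall>m\<in>M. \<exists>f\<in>inv_into M \<phi> ` \<phi> ` M. \<phi> m = \<phi> f"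
  proof
    fix m
    assume "m \<in> M"
    then have "inv_into M \<phi> (\<phi> m) \<in> inv_into M \<phi> ` \<phi> ` M" "\<phi> (inv_into M \<phi> (\<phi> m)) = \<phi> m"
      by (simp_all add: f_inv_into_f)
    then show "\<exists>f\<in>inv_into M \<phi> ` \<phi> ` M. \<phi> m = \<phi> f"
      by metis
  qed
qed

lemma finite_answers_prox_minimal_edit_prox:
  fixes ar :: "'r::finite \<Rightarrow> nat"
  assumes q: "is_cq ar q" and S: "S \<subseteq> {q'. is_cq ar q' \<and> arity q' = arity q}"
  shows "finite (answers ` {m. prox_minimal edit_prox q S m})"
proof (cases "\<exists>m0. prox_minimal edit_prox q S m0")
  case True
  then obtain m0 where m0: "prox_minimal edit_prox q S m0"
    by blast
  have "m \<in> S" "edit_dist q m \<le> edit_dist q m0" if "prox_minimal edit_prox q S m" for m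
    using that m0 by (simp_all add: prox_minimal_edit_prox_iff)
  then have "{m. prox_minimal edit_prox q S m}
      \<subseteq> {m. is_cq ar m \<and> arity m = arity q \<and> edit_dist q m \<le> edit_dist q m0}"
    using S by blast
  then show ?thesis
    using finite_answers_edit_dist_le[OF q] by (rule finite_subset[OF image_mono])
next
  case False
  then have "{m. prox_minimal edit_prox q S m} = {}"
    by blast
  then show ?thesis
    by (metis finite.emptyI image_empty)
qed

theorem proposition34:
  fixes ar :: "'r::finite \<Rightarrow> nat"
  shows "prox_well_founded ar edit_prox \<and> prox_finite_basis ar edit_prox"
proof
  show "prox_well_founded ar edit_prox"
    unfolding prox_well_founded_def by (intro allI impI ex_prox_minimal_edit_prox)
  show "prox_finite_basis ar edit_prox"
    unfolding prox_finite_basis_def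
  proof (intro allI impI)
    fix q and S :: "'r cq set"
    let ?M = "{m. prox_minimal edit_prox q S m}"
    assume q: "is_cq ar q" and S: "S \<subseteq> {q'. is_cq ar q' \<and> arity q' = arity q}"
    obtain F where F: "finite F" "F \<subseteq> ?M" "\<forall>m\<in>?M. \<exists>f\<in>F. answers m = answers f"
      using ex_finite_representatives[OF finite_answers_prox_minimal_edit_prox[OF q S]] by blast
    show "\<exists>F. finite F \<and> F \<subseteq> ?M
        \<and> (\<forall>m. prox_minimal edit_prox q S m \<longrightarrow> (\<exists>f\<in>F. cq_equiv ar m f))"
    proof (intro exI conjI allI impI)
      show "finite F" "F \<subseteq> ?M"
        using F(1,2) .
      fix m
      assume "prox_minimal edit_prox q S m"
      then obtain f where "f \<in> F" "answers m = answers f"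
        using F(3) by blast
      then show "\<exists>f\<in>F. cq_equiv ar m f"
        unfolding cq_equiv_def by metis
    qed
  qed
qed

end
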